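(* There is an absolute constant $C$ such that for all positive integers $n$ and every height profile $(m,M)$ (of some sum-free subset of $\Lambda(R\cup L)$ meeting every fiber) with discrepancy $D$, $$\sum_{i=-2w}^{2w-2}|\Delta^2 m(i)|\le C(D+n),$$ where $(\Delta f)(i)=f(i+1)-f(i)$.
   Context: Sum-free: no $a,b,c$ (not necessarily distinct) with $a+b=c$, coordinatewise addition in $\mathbb{Z}^2$. $\Lambda(X)=\mathbb{Z}^2\cap X$. $R=\{(x,y):0.7n\le x+y\le n,\ |x-y|\le0.8n\}$, $L=\{(x,y):2\lceil0.7n\rceil\le x+y\le1.7n,\ |x-y|\le0.4n\}$, $w=\lfloor0.4n\rfloor$. Fibers $R_i=\{(x,y)\in\Lambda(R):x-y=i\}$ ($|i|\le2w$), $L_k=\{(x,y)\in\Lambda(L):x-y=k\}$ ($|k|\le w$). Height $h(x,y)=\lfloor(x+y-\lceil0.7n\rceil)/2\rfloor$ on $R$ and $\lfloor(x+y-2\lceil0.7n\rceil)/2\rfloor$ on $L$. For sum-free $S\subseteq\Lambda(R\cup L)$ meeting every fiber, its height profile is $(m,M)$ with $m(i)=\min h(S\cap R_i)$, $M(k)=\max h(S\cap L_k)$. Let $\mathcal{T}=\{(-t,2t,t):t\in[w]\}\cup\{(-w-t,2t-1,-w-1+t):t\in[w]\}$. For $s\in\{-1,0,1\}$ and $(i,j,k)\in\mathcal{T}$ set $d_s(i)=M(k+s)-m(j+s)-m(i)$ (taken to be $0$ when some index is outside the domain of $m$ or $M$), $D_s=\sum_{(i,j,k)\in\mathcal{T}}|d_s(i)|$,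 and the discrepancy is $D=\max\{D_{-1},D_0,D_1\}$. *)

theory Defs
  imports Main "HOL.Real"
begin

definition c7 :: "nat \<Rightarrow> int" where
  "c7 n = \<lceil>(7/10) * real n\<rceil>"

definition wd :: "nat \<Rightarrow> int" where
  "wd n = \<lfloor>(4/10) * real n\<rfloor>"

definition Rset :: "nat \<Rightarrow> (int \<times> int) set" where
  "Rset n = {(x, y). (7/10) * real n \<le> real_of_int (x + y) \<and> real_of_int (x + y) \<le> real n
                     \<and> \<bar>real_of_int (x - y)\<bar> \<le> (8/10) * real n}"

definition Lset :: "nat \<Rightarrow> (int \<times> int) set" where
  "Lset n = {(x, y). 2 * c7 n \<le> x + y \<and> real_of_int (x + y) \<le> (17/10) * real n
                     \<and> \<bar>real_of_int (x - y)\<bar> \<le> (4/10) * real n}"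

definition Rfib :: "nat \<Rightarrow> int \<Rightarrow> (int \<times> int) set" where
  "Rfib n i = {p \<in> Rset n. fst p - snd p = i}"

definition Lfib :: "nat \<Rightarrow> int \<Rightarrow> (int \<times> int) set" where
  "Lfib n k = {p \<in> Lset n. fst p - snd p = k}"

definition hR :: "nat \<Rightarrow> int \<times> int \<Rightarrow> int" where
  "hR n p = \<lfloor>real_of_int (fst p + snd p - c7 n) / 2\<rfloor>"

definition hL :: "nat \<Rightarrow> int \<times> int \<Rightarrow> int" where
  "hL n p = \<lfloor>real_of_int (fst p + snd p - 2 * c7 n) / 2\<rfloor>"

definition sum_free :: "(int \<times> int) set \<Rightarrow> bool" where
  "sum_free S \<longleftrightarrow> (\<forall>a\<in>S. \<forall>b\<in>S. \<forall>c\<in>S. (fst a + fst b, snd a + snd b) \<noteq> c)"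

definition meets_all_fibers :: "nat \<Rightarrow> (int \<times> int) set \<Rightarrow> bool" where
  "meets_all_fibers n S \<longleftrightarrow>
     (\<forall>i. \<bar>i\<bar> \<le> 2 * wd n \<longrightarrow> S \<inter> Rfib n i \<noteq> {}) \<and>
     (\<forall>k. \<bar>k\<bar> \<le> wd n \<longrightarrow> S \<inter> Lfib n k \<noteq> {})"

definition prof_m :: "nat \<Rightarrow> (int \<times> int) set \<Rightarrow> int \<Rightarrow> int" where
  "prof_m n S i = Min (hR n ` (S \<inter> Rfib n i))"

definition prof_M :: "nat \<Rightarrow> (int \<times> int) set \<Rightarrow> int \<Rightarrow> int" where
  "prof_M n S k = Max (hL n ` (S \<inter> Lfib n k))"

definition Tset :: "nat \<Rightarrow> (int \<times> int \<times> int) set" where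
  "Tset n = {(-t, 2 * t, t) | t. 1 \<le> t \<and> t \<le> wd n}
          \<union> {(- wd n - t, 2 * t - 1, - wd n - 1 + t) | t. 1 \<le> t \<and> t \<le> wd n}"

text \<open>d_s for a triple; 0 when some index is outside the domain of m ([-2w,2w]) or M ([-w,w]).\<close>
definition dval :: "nat \<Rightarrow> (int \<times> int) set \<Rightarrow> int \<Rightarrow> int \<times> int \<times> int \<Rightarrow> int" where
  "dval n S s t = (case t of (i, j, k) \<Rightarrow>
     (if \<bar>i\<bar> \<le> 2 * wd n \<and> \<bar>j + s\<bar> \<le> 2 * wd n \<and> \<bar>k + s\<bar> \<le> wd n
      then prof_M n S (k + s) - prof_m n S (j + s) - prof_m n S i else 0))"

definition Dsum :: "nat \<Rightarrow> (int \<times> int) set \<Rightarrow> int \<Rightarrow> int" where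
  "Dsum n S s = (\<Sum>t\<in>Tset n. \<bar>dval n S s t\<bar>)"

definition discrepancy :: "nat \<Rightarrow> (int \<times> int) set \<Rightarrow> int" where
  "discrepancy n S = max (Dsum n S (-1)) (max (Dsum n S 0) (Dsum n S 1))"

end

theory Submission
  imports Defs
begin

text \<open>
  Every triple \<open>(i, j, k)\<close> of \<open>\<T>\<close> has \<open>i + j = k\<close>, and \<open>d\<^sub>s\<close> compares \<open>M (k + s)\<close> with
  \<open>m (j + s) + m i\<close>. An alternating sum of four defects, taken for two consecutive triples of the
  second family and shifts \<open>s \<in> {-1, 0, 1}\<close>, cancels all values of \<open>M\<close> and the values of \<open>m\<close> at the
  far indices; what is left is the second difference of \<open>m\<close> at \<open>2t\<close>. The first family yields the
  second differences at the odd points \<open>2t + 1\<close> in the same way, so the second differences at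
  positive indices sum to at most \<open>8D\<close>. Another alternating sum of four defects of either family
  expresses the second difference at \<open>-(t + 1)\<close>, resp. \<open>-w - t - 1\<close>, through those at \<open>2t + 1\<close>
  and \<open>2t + 2\<close>, which costs a further \<open>24D\<close>. The at most five remaining indices contribute at
  most \<open>2n\<close> each, since all heights lie in \<open>[0, n]\<close>.
\<close>

definition second_diff :: "(int \<Rightarrow> int) \<Rightarrow> int \<Rightarrow> int" where
  "second_diff m c = m (c + 1) - 2 * m c + m (c - 1)"

text \<open>\<open>d\<^sub>s\<close> of the triple \<open>(-t, 2t, t)\<close>, resp. \<open>(-w - t, 2t - 1, -w - 1 + t)\<close>, of \<open>\<T>\<close>,
  without the truncation to \<open>0\<close> outside the domains of \<open>m\<close> and \<open>M\<close>.\<close>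

definition inner_defect :: "(int \<Rightarrow> int) \<Rightarrow> (int \<Rightarrow> int) \<Rightarrow> int \<Rightarrow> int \<Rightarrow> int" where
  "inner_defect m M s t = M (t + s) - m (2 * t + s) - m (- t)"

definition outer_defect :: "int \<Rightarrow> (int \<Rightarrow> int) \<Rightarrow> (int \<Rightarrow> int) \<Rightarrow> int \<Rightarrow> int \<Rightarrow> int" where
  "outer_defect w m M s t = M (- w - 1 + t + s) - m (2 * t - 1 + s) - m (- w - t)"

lemma second_diff_even:
  "second_diff m (2 * t) = outer_defect w m M 1 t - outer_defect w m M 0 (t + 1)
     + outer_defect w m M (-1) (t + 1) - outer_defect w m M 0 t"
  unfolding second_diff_def outer_defect_def by (simp add: algebra_simps)

lemma second_diff_odd:
  "second_diff m (2 * t + 1) = inner_defect m M 1 t - inner_defect m M 0 t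
     - inner_defect m M 0 (t + 1) + inner_defect m M (-1) (t + 1)"
  unfolding second_diff_def inner_defect_def by (simp add: algebra_simps)

lemma second_diff_neg_inner:
  "second_diff m (- t - 1) = - second_diff m (2 * t + 1) - second_diff m (2 * t + 2)
     + inner_defect m M (-1) (t + 1) - inner_defect m M 0 t
     - inner_defect m M (-1) (t + 2) + inner_defect m M 0 (t + 1)"
  unfolding second_diff_def inner_defect_def by (simp add: algebra_simps minus_diff_commute)

lemma second_diff_neg_outer:
  "second_diff m (- w - t - 1) = - second_diff m (2 * t + 1) - second_diff m (2 * t + 2)
     + outer_defect w m M 1 (t + 1) - outer_defect w m M 0 (t + 2)
     - outer_defect w m M 1 t + outer_defect w m M 0 (t + 1)"
  unfolding second_diff_def outer_defect_def
  by (simp add: algebra_simps minus_diff_commute)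
    (simp only: diff_diff_eq[symmetric] minus_diff_commute diff_right_commute)

lemma abs_second_diff_le:
  assumes "0 \<le> m (c - 1)" "m (c - 1) \<le> B" "0 \<le> m c" "m c \<le> B" "0 \<le> m (c + 1)" "m (c + 1) \<le> B"
  shows "\<bar>second_diff m c\<bar> \<le> 2 * B"
  using assms unfolding second_diff_def by linarith

lemma sum_shift_int:
  fixes f :: "int \<Rightarrow> 'a::comm_monoid_add"
  shows "(\<Sum>t = a..b. f (t + k)) = (\<Sum>t = a + k..b + k. f t)"
  by (rule sum.reindex_bij_witness[of _ "\<lambda>t. t - k" "\<lambda>t. t + k"]) auto

lemma sum_Un_le:
  fixes f :: "'b \<Rightarrow> 'a::ordered_comm_monoid_add"
  assumes "finite A" "finite B" "\<And>x. x \<in> A \<union> B \<Longrightarrow> 0 \<le> f x"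
  shows "sum f (A \<union> B) \<le> sum f A + sum f B"
proof -
  have "0 \<le> sum f (A \<inter> B)" using assms(3) by (intro sum_nonneg) auto
  then have "sum f (A \<union> B) \<le> sum f (A \<union> B) + sum f (A \<inter> B)" by (rule add_increasing2) simp
  also have "\<dots> = sum f A + sum f B" using assms(1,2) by (rule sum.union_inter)
  finally show ?thesis .
qed

lemma int_interval_cover:
  fixes w :: int
  shows "{- 2 * w + 1..2 * w - 1} \<subseteq> (\<lambda>t. 2 * t) ` {1..w - 1} \<union> (\<lambda>t. 2 * t + 1) ` {1..w - 1}
           \<union> (\<lambda>t. - t - 1) ` {1..w - 2} \<union> (\<lambda>t. - w - t - 1) ` {1..w - 2} \<union> {-1, 0, 1, - w, - w - 1}"
    (is "?I \<subseteq> ?U")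
proof
  fix c assume c: "c \<in> ?I"
  consider "2 \<le> c" "c mod 2 = 0" | "2 \<le> c" "c mod 2 = 1" | "- w + 1 \<le> c" "c \<le> -2" | "c \<le> - w - 2"
    | "c \<in> {-1, 0, 1, - w, - w - 1}"
    by force
  then show "c \<in> ?U"
  proof cases
    case 1
    then have "c = 2 * (c div 2)" "c div 2 \<in> {1..w - 1}" using c by auto
    then show ?thesis by blast
  next
    case 2
    then have "c = 2 * (c div 2) + 1" "c div 2 \<in> {1..w - 1}" using c by (auto, presburger+)
    then show ?thesis by blast
  next
    case 3
    then have "c = - (- c - 1) - 1" "- c - 1 \<in> {1..w - 2}" by auto
    then show ?thesis by blast
  next
    case 4
    then have "c = - w - (- w - 1 - c) - 1" "- w - 1 - c \<in> {1..w - 2}" using c by auto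
    then show ?thesis by blast
  qed blast
qed

text \<open>\<open>D\<close> bounds the total defect of any triples of one family whose shifted indices stay in
  the domains of \<open>m\<close> and \<open>M\<close>; for \<open>t \<in> [1, w]\<close> the constraint on \<open>j + s\<close> follows from the one on \<open>k + s\<close>.\<close>

locale defect_bounded =
  fixes w B D :: int and m M :: "int \<Rightarrow> int"
  assumes w_nonneg: "0 \<le> w"
    and m_range: "\<bar>i\<bar> \<le> 2 * w \<Longrightarrow> 0 \<le> m i \<and> m i \<le> B"
    and inner_defect_sum_le: "s \<in> {-1, 0, 1} \<Longrightarrow> A \<subseteq> {1..w} \<Longrightarrow> (\<And>t. t \<in> A \<Longrightarrow> \<bar>t + s\<bar> \<le> w)
      \<Longrightarrow> (\<Sum>t\<in>A. \<bar>inner_defect m M s t\<bar>) \<le> D"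
    and outer_defect_sum_le: "s \<in> {-1, 0, 1} \<Longrightarrow> A \<subseteq> {1..w} \<Longrightarrow> (\<And>t. t \<in> A \<Longrightarrow> \<bar>- w - 1 + t + s\<bar> \<le> w)
      \<Longrightarrow> (\<Sum>t\<in>A. \<bar>outer_defect w m M s t\<bar>) \<le> D"
begin

lemma inner_defect_shift_sum_le:
  assumes "s \<in> {-1, 0, 1}" "1 \<le> a + k" "b + k \<le> w" "s = 1 \<Longrightarrow> b + k < w"
  shows "(\<Sum>t = a..b. \<bar>inner_defect m M s (t + k)\<bar>) \<le> D"
proof -
  have "(\<Sum>t = a..b. \<bar>inner_defect m M s (t + k)\<bar>) = (\<Sum>t = a + k..b + k. \<bar>inner_defect m M s t\<bar>)"
    by (rule sum_shift_int[of "\<lambda>t. \<bar>inner_defect m M s t\<bar>"])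
  also have "\<dots> \<le> D"
    using assms by (intro inner_defect_sum_le) auto
  finally show ?thesis .
qed

lemma outer_defect_shift_sum_le:
  assumes "s \<in> {-1, 0, 1}" "1 \<le> a + k" "b + k \<le> w" "s = -1 \<Longrightarrow> 2 \<le> a + k"
  shows "(\<Sum>t = a..b. \<bar>outer_defect w m M s (t + k)\<bar>) \<le> D"
proof -
  have "(\<Sum>t = a..b. \<bar>outer_defect w m M s (t + k)\<bar>) = (\<Sum>t = a + k..b + k. \<bar>outer_defect w m M s t\<bar>)"
    by (rule sum_shift_int[of "\<lambda>t. \<bar>outer_defect w m M s t\<bar>"])
  also have "\<dots> \<le> D"
    using assms by (intro outer_defect_sum_le) auto
  finally show ?thesis .
qed

lemma sum_second_diff_even_le: "(\<Sum>t = 1..w - 1. \<bar>second_diff m (2 * t)\<bar>) \<le> 4 * D"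
proof -
  let ?G = "outer_defect w m M"
  \<comment> \<open>\<open>t + 0\<close> keeps every summand in the shape of the shift lemmas\<close>
  have "(\<Sum>t = 1..w - 1. \<bar>second_diff m (2 * t)\<bar>)
      \<le> (\<Sum>t = 1..w - 1. \<bar>?G 1 (t + 0)\<bar> + \<bar>?G 0 (t + 1)\<bar> + \<bar>?G (-1) (t + 1)\<bar> + \<bar>?G 0 (t + 0)\<bar>)"
    by (intro sum_mono) (simp add: second_diff_even[where w = w and M = M])
  also have "\<dots> = (\<Sum>t = 1..w - 1. \<bar>?G 1 (t + 0)\<bar>) + (\<Sum>t = 1..w - 1. \<bar>?G 0 (t + 1)\<bar>)
      + (\<Sum>t = 1..w - 1. \<bar>?G (-1) (t + 1)\<bar>) + (\<Sum>t = 1..w - 1. \<bar>?G 0 (t + 0)\<bar>)"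
    by (simp only: sum.distrib)
  also have "\<dots> \<le> D + D + D + D"
    by (intro add_mono outer_defect_shift_sum_le) auto
  finally show ?thesis by simp
qed

lemma sum_second_diff_odd_le: "(\<Sum>t = 1..w - 1. \<bar>second_diff m (2 * t + 1)\<bar>) \<le> 4 * D"
proof -
  let ?F = "inner_defect m M"
  have "(\<Sum>t = 1..w - 1. \<bar>second_diff m (2 * t + 1)\<bar>)
      \<le> (\<Sum>t = 1..w - 1. \<bar>?F 1 (t + 0)\<bar> + \<bar>?F 0 (t + 0)\<bar> + \<bar>?F 0 (t + 1)\<bar> + \<bar>?F (-1) (t + 1)\<bar>)"
    by (intro sum_mono) (simp add: second_diff_odd[where M = M])
  also have "\<dots> = (\<Sum>t = 1..w - 1. \<bar>?F 1 (t + 0)\<bar>) + (\<Sum>t = 1..w - 1. \<bar>?F 0 (t + 0)\<bar>)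
      + (\<Sum>t = 1..w - 1. \<bar>?F 0 (t + 1)\<bar>) + (\<Sum>t = 1..w - 1. \<bar>?F (-1) (t + 1)\<bar>)"
    by (simp only: sum.distrib)
  also have "\<dots> \<le> D + D + D + D"
    by (intro add_mono inner_defect_shift_sum_le) auto
  finally show ?thesis by simp
qed

lemma sum_second_diff_odd_even_le:
  "(\<Sum>t = 1..w - 2. \<bar>second_diff m (2 * t + 1)\<bar> + \<bar>second_diff m (2 * t + 2)\<bar>) \<le> 8 * D"
proof -
  have "(\<Sum>t = 1..w - 2. \<bar>second_diff m (2 * t + 1)\<bar>) \<le> (\<Sum>t = 1..w - 1. \<bar>second_diff m (2 * t + 1)\<bar>)"
    by (intro sum_mono2) auto
  moreover have "(\<Sum>t = 1..w - 2. \<bar>second_diff m (2 * t + 2)\<bar>) \<le> (\<Sum>t = 1..w - 1. \<bar>second_diff m (2 * t)\<bar>)"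
  proof -
    have "(\<Sum>t = 1..w - 2. \<bar>second_diff m (2 * t + 2)\<bar>) = (\<Sum>t = 1..w - 2. \<bar>second_diff m (2 * (t + 1))\<bar>)"
      by (simp add: algebra_simps)
    also have "\<dots> = (\<Sum>t = 2..w - 1. \<bar>second_diff m (2 * t)\<bar>)"
      using sum_shift_int[where f = "\<lambda>t. \<bar>second_diff m (2 * t)\<bar>" and a = 1 and b = "w - 2" and k = 1]
      by simp
    also have "\<dots> \<le> (\<Sum>t = 1..w - 1. \<bar>second_diff m (2 * t)\<bar>)"
      by (intro sum_mono2) auto
    finally show ?thesis .
  qed
  ultimately show ?thesis
    using sum_second_diff_odd_le sum_second_diff_even_le by (simp add: sum.distrib)
qed

lemma sum_second_diff_neg_inner_le: "(\<Sum>t = 1..w - 2. \<bar>second_diff m (- t - 1)\<bar>) \<le> 12 * D"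
proof -
  let ?F = "inner_defect m M"
  let ?P = "\<lambda>t. \<bar>second_diff m (2 * t + 1)\<bar> + \<bar>second_diff m (2 * t + 2)\<bar>"
  have "(\<Sum>t = 1..w - 2. \<bar>second_diff m (- t - 1)\<bar>)
      \<le> (\<Sum>t = 1..w - 2. ?P t + \<bar>?F (-1) (t + 1)\<bar> + \<bar>?F 0 (t + 0)\<bar> + \<bar>?F (-1) (t + 2)\<bar> + \<bar>?F 0 (t + 1)\<bar>)"
    by (intro sum_mono) (simp add: second_diff_neg_inner[where M = M])
  also have "\<dots> = (\<Sum>t = 1..w - 2. ?P t) + (\<Sum>t = 1..w - 2. \<bar>?F (-1) (t + 1)\<bar>)
      + (\<Sum>t = 1..w - 2. \<bar>?F 0 (t + 0)\<bar>) + (\<Sum>t = 1..w - 2. \<bar>?F (-1) (t + 2)\<bar>)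
      + (\<Sum>t = 1..w - 2. \<bar>?F 0 (t + 1)\<bar>)"
    by (simp only: sum.distrib)
  also have "\<dots> \<le> 8 * D + D + D + D + D"
    by (intro add_mono sum_second_diff_odd_even_le inner_defect_shift_sum_le) auto
  finally show ?thesis by simp
qed

lemma sum_second_diff_neg_outer_le: "(\<Sum>t = 1..w - 2. \<bar>second_diff m (- w - t - 1)\<bar>) \<le> 12 * D"
proof -
  let ?G = "outer_defect w m M"
  let ?P = "\<lambda>t. \<bar>second_diff m (2 * t + 1)\<bar> + \<bar>second_diff m (2 * t + 2)\<bar>"
  have "(\<Sum>t = 1..w - 2. \<bar>second_diff m (- w - t - 1)\<bar>)
      \<le> (\<Sum>t = 1..w - 2. ?P t + \<bar>?G 1 (t + 1)\<bar> + \<bar>?G 0 (t + 2)\<bar> + \<bar>?G 1 (t + 0)\<bar> + \<bar>?G 0 (t + 1)\<bar>)"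
    by (intro sum_mono) (simp add: second_diff_neg_outer[where M = M])
  also have "\<dots> = (\<Sum>t = 1..w - 2. ?P t) + (\<Sum>t = 1..w - 2. \<bar>?G 1 (t + 1)\<bar>)
      + (\<Sum>t = 1..w - 2. \<bar>?G 0 (t + 2)\<bar>) + (\<Sum>t = 1..w - 2. \<bar>?G 1 (t + 0)\<bar>)
      + (\<Sum>t = 1..w - 2. \<bar>?G 0 (t + 1)\<bar>)"
    by (simp only: sum.distrib)
  also have "\<dots> \<le> 8 * D + D + D + D + D"
    by (intro add_mono sum_second_diff_odd_even_le outer_defect_shift_sum_le) auto
  finally show ?thesis by simp
qed

lemma sum_second_diff_exceptional_le:
  "(\<Sum>c \<in> {- 2 * w + 1..2 * w - 1} \<inter> {-1, 0, 1, - w, - w - 1}. \<bar>second_diff m c\<bar>) \<le> 10 * B"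
proof -
  let ?X = "{- 2 * w + 1..2 * w - 1} \<inter> {-1, 0, 1, - w, - w - 1}"
  have "B \<ge> 0" using m_range[of 0] w_nonneg by simp
  have "card ?X \<le> 5"
    using card_mono[of "set [-1, 0, 1, - w, - w - 1]" ?X] card_length[of "[-1, 0, 1, - w, - w - 1]"]
    by simp
  have "(\<Sum>c\<in>?X. \<bar>second_diff m c\<bar>) \<le> of_nat (card ?X) * (2 * B)"
  proof (rule sum_bounded_above)
    fix c assume "c \<in> ?X"
    then show "\<bar>second_diff m c\<bar> \<le> 2 * B"
      using m_range[of "c - 1"] m_range[of c] m_range[of "c + 1"] by (intro abs_second_diff_le) auto
  qed
  also have "\<dots> \<le> 5 * (2 * B)"
    using \<open>card ?X \<le> 5\<close> \<open>B \<ge> 0\<close> by (intro mult_right_mono) auto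
  finally show ?thesis by simp
qed

theorem sum_second_diff_le: "(\<Sum>c = - 2 * w + 1..2 * w - 1. \<bar>second_diff m c\<bar>) \<le> 32 * D + 10 * B"
proof -
  let ?f = "\<lambda>c. \<bar>second_diff m c\<bar>"
  let ?E = "(\<lambda>t. 2 * t) ` {1..w - 1}" and ?O = "(\<lambda>t. 2 * t + 1) ` {1..w - 1}"
  let ?N = "(\<lambda>t. - t - 1) ` {1..w - 2}" and ?F = "(\<lambda>t. - w - t - 1) ` {1..w - 2}"
  let ?X = "{- 2 * w + 1..2 * w - 1} \<inter> {-1, 0, 1, - w, - w - 1}"
  have "{- 2 * w + 1..2 * w - 1} \<subseteq> ?E \<union> ?O \<union> ?N \<union> ?F \<union> ?X"
    using int_interval_cover[of w] by blast
  then have "sum ?f {- 2 * w + 1..2 * w - 1} \<le> sum ?f (?E \<union> ?O \<union> ?N \<union> ?F \<union> ?X)"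
    by (intro sum_mono2) auto
  also have "\<dots> \<le> sum ?f (?E \<union> ?O \<union> ?N \<union> ?F) + sum ?f ?X"
    by (rule sum_Un_le) auto
  also have "\<dots> \<le> sum ?f (?E \<union> ?O \<union> ?N) + sum ?f ?F + sum ?f ?X"
    by (intro add_right_mono sum_Un_le) auto
  also have "\<dots> \<le> sum ?f (?E \<union> ?O) + sum ?f ?N + sum ?f ?F + sum ?f ?X"
    by (intro add_right_mono sum_Un_le) auto
  also have "\<dots> \<le> sum ?f ?E + sum ?f ?O + sum ?f ?N + sum ?f ?F + sum ?f ?X"
    by (intro add_right_mono sum_Un_le) auto
  also have "\<dots> \<le> 4 * D + 4 * D + 12 * D + 12 * D + 10 * B"
    by (intro add_mono order_trans[OF sum_image_le] sum_second_diff_exceptional_le)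
       (auto simp: o_def sum_second_diff_even_le sum_second_diff_odd_le
         sum_second_diff_neg_inner_le sum_second_diff_neg_outer_le)
  finally show ?thesis by simp
qed

end

lemma finite_Rset: "finite (Rset n)"
proof (rule finite_subset)
  show "Rset n \<subseteq> {- int n..int n} \<times> {- int n..int n}"
  proof
    fix p assume "p \<in> Rset n"
    then obtain x y where "p = (x, y)" "(7/10) * real n \<le> real_of_int (x + y)"
      "real_of_int (x + y) \<le> real n" "\<bar>real_of_int (x - y)\<bar> \<le> (8/10) * real n"
      unfolding Rset_def by auto
    moreover from this have "0 \<le> x + y" "x + y \<le> int n" "\<bar>x - y\<bar> \<le> int n" by linarith+
    ultimately show "p \<in> {- int n..int n} \<times> {- int n..int n}" by auto
  qed
qed simp

lemma hR_range:
  assumes "p \<in> Rset n"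
  shows "0 \<le> hR n p \<and> hR n p \<le> int n"
proof -
  obtain x y where p: "p = (x, y)" and "(7/10) * real n \<le> real_of_int (x + y)"
      "real_of_int (x + y) \<le> real n"
    using assms unfolding Rset_def by auto
  then have "c7 n \<le> x + y" "0 \<le> c7 n" "x + y \<le> int n"
    unfolding c7_def by (simp_all add: ceiling_le_iff)
  moreover have "hR n p = (x + y - c7 n) div 2"
    unfolding hR_def p using floor_divide_of_int_eq[of "x + y - c7 n" 2] by simp
  ultimately show ?thesis by auto
qed

lemma prof_m_range:
  assumes "meets_all_fibers n S" "\<bar>i\<bar> \<le> 2 * wd n"
  shows "0 \<le> prof_m n S i \<and> prof_m n S i \<le> int n"
proof -
  have "S \<inter> Rfib n i \<noteq> {}" using assms unfolding meets_all_fibers_def by blast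
  moreover have "finite (S \<inter> Rfib n i)"
    by (rule finite_subset[OF _ finite_Rset[of n]]) (auto simp: Rfib_def)
  ultimately have "prof_m n S i \<in> hR n ` (S \<inter> Rfib n i)"
    unfolding prof_m_def by (intro Min_in) auto
  then show ?thesis using hR_range unfolding Rfib_def by auto
qed

lemma Tset_eq: "Tset n = (\<lambda>t. (- t, 2 * t, t)) ` {1..wd n}
    \<union> (\<lambda>t. (- wd n - t, 2 * t - 1, - wd n - 1 + t)) ` {1..wd n}"
  unfolding Tset_def by auto

lemma sum_dval_le_Dsum:
  assumes "inj_on g A" "g ` A \<subseteq> Tset n"
  shows "(\<Sum>t\<in>A. \<bar>dval n S s (g t)\<bar>) \<le> Dsum n S s"
proof -
  have "(\<Sum>t\<in>A. \<bar>dval n S s (g t)\<bar>) = (\<Sum>x\<in>g ` A. \<bar>dval n S s x\<bar>)"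
    using assms(1) by (simp add: sum.reindex)
  also have "\<dots> \<le> Dsum n S s"
    unfolding Dsum_def using assms(2) by (intro sum_mono2) (auto simp: Tset_eq)
  finally show ?thesis .
qed

lemma Dsum_le_discrepancy: "s \<in> {-1, 0, 1} \<Longrightarrow> Dsum n S s \<le> discrepancy n S"
  unfolding discrepancy_def by auto

lemma inner_defect_eq_dval:
  assumes "t \<in> {1..wd n}" "\<bar>t + s\<bar> \<le> wd n"
  shows "inner_defect (prof_m n S) (prof_M n S) s t = dval n S s (- t, 2 * t, t)"
proof -
  have "\<bar>- t\<bar> \<le> 2 * wd n" "\<bar>2 * t + s\<bar> \<le> 2 * wd n" using assms by auto
  with assms(2) show ?thesis by (simp add: dval_def inner_defect_def)
qed

lemma outer_defect_eq_dval:
  assumes "t \<in> {1..wd n}" "s \<in> {-1, 0, 1}" "\<bar>- wd n - 1 + t + s\<bar> \<le> wd n"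
  shows "outer_defect (wd n) (prof_m n S) (prof_M n S) s t
    = dval n S s (- wd n - t, 2 * t - 1, - wd n - 1 + t)"
proof -
  have "\<bar>- wd n - t\<bar> \<le> 2 * wd n" "\<bar>2 * t - 1 + s\<bar> \<le> 2 * wd n" using assms by auto
  with assms(3) show ?thesis by (simp add: dval_def outer_defect_def)
qed

lemma height_profile_defect_bounded:
  assumes "meets_all_fibers n S"
  shows "defect_bounded (wd n) (int n) (discrepancy n S) (prof_m n S) (prof_M n S)"
proof
  show "0 \<le> wd n" unfolding wd_def by simp
  show "0 \<le> prof_m n S i \<and> prof_m n S i \<le> int n" if "\<bar>i\<bar> \<le> 2 * wd n" for i
    using prof_m_range[OF assms that] .
next
  fix s A assume s: "s \<in> {-1, 0, 1}" and A: "A \<subseteq> {1..wd n}" "\<And>t. t \<in> A \<Longrightarrow> \<bar>t + s\<bar> \<le> wd n"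
  have "(\<Sum>t\<in>A. \<bar>inner_defect (prof_m n S) (prof_M n S) s t\<bar>) = (\<Sum>t\<in>A. \<bar>dval n S s (- t, 2 * t, t)\<bar>)"
    using A by (intro sum.cong arg_cong[where f = abs] inner_defect_eq_dval) auto
  also have "\<dots> \<le> Dsum n S s"
    using A by (intro sum_dval_le_Dsum) (auto simp: inj_on_def Tset_eq)
  also have "\<dots> \<le> discrepancy n S"
    using s by (rule Dsum_le_discrepancy)
  finally show "(\<Sum>t\<in>A. \<bar>inner_defect (prof_m n S) (prof_M n S) s t\<bar>) \<le> discrepancy n S" .
next
  fix s A assume s: "s \<in> {-1, 0, 1}"
    and A: "A \<subseteq> {1..wd n}" "\<And>t. t \<in> A \<Longrightarrow> \<bar>- wd n - 1 + t + s\<bar> \<le> wd n"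
  have "(\<Sum>t\<in>A. \<bar>outer_defect (wd n) (prof_m n S) (prof_M n S) s t\<bar>)
      = (\<Sum>t\<in>A. \<bar>dval n S s (- wd n - t, 2 * t - 1, - wd n - 1 + t)\<bar>)"
    using s A by (intro sum.cong arg_cong[where f = abs] outer_defect_eq_dval) auto
  also have "\<dots> \<le> Dsum n S s"
    using A by (intro sum_dval_le_Dsum) (auto simp: inj_on_def Tset_eq)
  also have "\<dots> \<le> discrepancy n S"
    using s by (rule Dsum_le_discrepancy)
  finally show "(\<Sum>t\<in>A. \<bar>outer_defect (wd n) (prof_m n S) (prof_M n S) s t\<bar>) \<le> discrepancy n S" .
qed

theorem mainTheorem18:
  shows "\<exists>C::real. \<forall>n::nat. \<forall>S. n > 0 \<longrightarrow> S \<subseteq> Rset n \<union> Lset n \<longrightarrow> sum_free S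
           \<longrightarrow> meets_all_fibers n S \<longrightarrow>
           real_of_int (\<Sum>i = - 2 * wd n .. 2 * wd n - 2.
              \<bar>prof_m n S (i + 2) - 2 * prof_m n S (i + 1) + prof_m n S i\<bar>)
           \<le> C * (real_of_int (discrepancy n S) + real n)"
proof (intro exI[of _ 32] allI impI)
  fix n :: nat and S
  assume "meets_all_fibers n S"
  then interpret defect_bounded "wd n" "int n" "discrepancy n S" "prof_m n S" "prof_M n S"
    by (rule height_profile_defect_bounded)
  have "(\<Sum>i = - 2 * wd n .. 2 * wd n - 2. \<bar>prof_m n S (i + 2) - 2 * prof_m n S (i + 1) + prof_m n S i\<bar>)
      = (\<Sum>i = - 2 * wd n .. 2 * wd n - 2. \<bar>second_diff (prof_m n S) (i + 1)\<bar>)" (is "?sum = _")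
    by (simp add: second_diff_def add.assoc)
  also have "\<dots> = (\<Sum>c = - 2 * wd n + 1..2 * wd n - 2 + 1. \<bar>second_diff (prof_m n S) c\<bar>)"
    by (rule sum_shift_int[of "\<lambda>c. \<bar>second_diff (prof_m n S) c\<bar>"])
  also have "\<dots> \<le> 32 * discrepancy n S + 10 * int n"
    using sum_second_diff_le by simp
  finally have "real_of_int ?sum \<le> real_of_int (32 * discrepancy n S + 10 * int n)"
    by (simp only: of_int_le_iff)
  then show "real_of_int ?sum \<le> 32 * (real_of_int (discrepancy n S) + real n)"
    by simp
qed

end
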